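(* Let $A\in\mathrm{Sym}(\mathbb R^{n+1})$ with $\vec a_0\ne 0$, and let $B=I_n+\sqrt{-1}A$ (which is invertible). Then $\mathrm{Re}(B^{-1})$ is positive semidefinite with exactly one zero eigenvalue, and its null space is spanned by the first column $(a_{00},a_{01},\dots,a_{0n})^T$ of $A$.
   Context: $I_n=\mathrm{diag}(0,1,\dots,1)\in\mathrm{Sym}(\mathbb R^{n+1})$. For $A=[a_{ij}]_{i,j=0}^n$, $\vec a_0=(a_{01},\dots,a_{0n})$. For a complex matrix $M$, $\mathrm{Re}\,M$ denotes the entrywise real part. *)

theory Defs
  imports Jordan_Normal_Form.Matrix_Kernel Jordan_Normal_Form.Char_Poly
begin

text \<open>Matrices are indexed by 0..n, i.e. they are (n+1) x (n+1) JNF matrices.\<close>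

text \<open>I_n = diag(0,1,...,1) of size n+1.\<close>
definition I_mat :: "nat \<Rightarrow> real mat" where
  "I_mat n = mat (n+1) (n+1) (\<lambda>(i,j). if i = j \<and> i \<noteq> 0 then 1 else 0)"

definition B_mat :: "nat \<Rightarrow> real mat \<Rightarrow> complex mat" where
  "B_mat n A = map_mat complex_of_real (I_mat n) + \<i> \<cdot>\<^sub>m map_mat complex_of_real A"

definition Re_mat :: "complex mat \<Rightarrow> real mat" where
  "Re_mat M = map_mat Re M"

definition psd_mat :: "nat \<Rightarrow> real mat \<Rightarrow> bool" where
  "psd_mat m M \<longleftrightarrow> M \<in> carrier_mat m m \<and> transpose_mat M = M \<and>
     (\<forall>x \<in> carrier_vec m. 0 \<le> x \<bullet> (M *\<^sub>v x))"

end

theory Submission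
  imports Defs Jordan_Normal_Form.Jordan_Normal_Form_Existence Jordan_Normal_Form.Jordan_Normal_Form_Uniqueness
begin

text \<open>Write \<open>w = C x = u + \<i> v\<close> for real \<open>x\<close>, so that \<open>B w = x\<close>. Splitting into real and
  imaginary parts gives \<open>x = I\<^sub>n u - A v\<close> and \<open>A u = - I\<^sub>n v\<close>, and the symmetry of \<open>A\<close> yields
  \<open>x \<bullet> Re (C x) = x \<bullet> u = |I\<^sub>n u|\<^sup>2 + |I\<^sub>n v|\<^sup>2 \<ge> 0\<close>. If \<open>u = 0\<close> then \<open>I\<^sub>n v = 0\<close>, i.e.
  \<open>v\<close> is a multiple of \<open>e\<^sub>0\<close>, and \<open>x = - A v\<close> is a multiple of the first column of \<open>A\<close>; the
  same computation with \<open>x = 0\<close> shows that \<open>B\<close> is injective. Finally \<open>Re C\<close> is symmetric, so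
  \<open>ker (Re C)\<^sup>2 = ker (Re C)\<close> and the algebraic multiplicity of the eigenvalue 0 equals its
  geometric multiplicity, which is one.\<close>

lemma real_scalar_prod_self_nonneg: "0 \<le> (y :: real vec) \<bullet> y"
  using conjugate_square_ge_0_vec[of y] by simp

lemma real_scalar_prod_self_eq_0_iff:
  "(y :: real vec) \<in> carrier_vec n \<Longrightarrow> y \<bullet> y = 0 \<longleftrightarrow> y = 0\<^sub>v n"
  using conjugate_square_eq_0_vec[of y n] by simp

lemma smult_vec_eq_0_iff:
  fixes a :: "'a :: idom vec"
  assumes "a \<noteq> 0\<^sub>v n" "a \<in> carrier_vec n"
  shows "c \<cdot>\<^sub>v a = 0\<^sub>v n \<longleftrightarrow> c = 0"
proof
  assume ca: "c \<cdot>\<^sub>v a = 0\<^sub>v n"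
  obtain i where "i < n" "a $ i \<noteq> 0"
    using assms by (metis carrier_vecD eq_vecI index_zero_vec)
  with arg_cong[OF ca, of "\<lambda>v. v $ i"] assms(2) show "c = 0" by simp
qed (use assms in auto)

lemma mult_mat_vec_unit_vec:
  fixes A :: "'a :: semiring_1 mat"
  assumes "A \<in> carrier_mat m k" "i < k"
  shows "A *\<^sub>v unit_vec k i = col A i"
  using assms by (intro eq_vecI) auto

lemma mult_mat_vec_inverse_cancel:
  fixes B C :: "'a :: semiring_1 mat"
  assumes "B \<in> carrier_mat n n" "C \<in> carrier_mat n n" "B * C = 1\<^sub>m n" "v \<in> carrier_vec n"
  shows "B *\<^sub>v (C *\<^sub>v v) = v"
  by (metis assms assoc_mult_mat_vec one_mult_mat_vec)

lemma transpose_right_inverse_of_symmetric: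
  fixes B C :: "'a :: comm_ring_1 mat"
  assumes B: "B \<in> carrier_mat n n" and C: "C \<in> carrier_mat n n"
    and sym: "transpose_mat B = B" and BC: "B * C = 1\<^sub>m n"
  shows "transpose_mat C = C"
proof -
  have CtB: "transpose_mat C * B = 1\<^sub>m n"
    using arg_cong[OF BC, of transpose_mat] transpose_mult[OF B C] sym by simp
  have "transpose_mat C = transpose_mat C * (B * C)" using BC C by simp
  also have "\<dots> = (transpose_mat C * B) * C" using B C by simp
  also have "\<dots> = C" using CtB C by simp
  finally show ?thesis .
qed

lemma complex_vec_eqI:
  fixes z z' :: "complex vec"
  assumes "dim_vec z = dim_vec z'" "map_vec Re z = map_vec Re z'" "map_vec Im z = map_vec Im z'"
  shows "z = z'"
proof (rule eq_vecI)
  fix i assume i: "i < dim_vec z'"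
  have "map_vec Re z $ i = map_vec Re z' $ i" "map_vec Im z $ i = map_vec Im z' $ i"
    using assms by simp_all
  then show "z $ i = z' $ i"
    using i assms(1) by (auto intro: complex_eqI)
qed (use assms in simp)

lemma map_vec_Re_Im_zero [simp]:
  "map_vec Re (0\<^sub>v n) = 0\<^sub>v n" "map_vec Im (0\<^sub>v n) = 0\<^sub>v n"
  by auto

lemma map_vec_Re_of_real [simp]: "map_vec Re (map_vec complex_of_real x) = x"
  and map_vec_Im_of_real [simp]: "map_vec Im (map_vec complex_of_real x) = 0\<^sub>v (dim_vec x)"
  by auto

lemma map_vec_Re_Im_smult_of_real [simp]:
  "map_vec Re (z \<cdot>\<^sub>v map_vec complex_of_real y) = Re z \<cdot>\<^sub>v y"
  "map_vec Im (z \<cdot>\<^sub>v map_vec complex_of_real y) = Im z \<cdot>\<^sub>v y"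
  by auto

lemma of_real_mat_mult_vec_Re_Im:
  fixes R :: "real mat"
  assumes "R \<in> carrier_mat m k" "z \<in> carrier_vec k"
  shows "map_vec Re (map_mat of_real R *\<^sub>v z) = R *\<^sub>v map_vec Re z"
    and "map_vec Im (map_mat of_real R *\<^sub>v z) = R *\<^sub>v map_vec Im z"
  using assms by (auto simp: scalar_prod_def)

lemma mat_kernel_of_real_iff:
  fixes R :: "real mat"
  assumes R: "R \<in> carrier_mat m k" and z: "z \<in> carrier_vec k"
  shows "z \<in> mat_kernel (map_mat of_real R)
    \<longleftrightarrow> map_vec Re z \<in> mat_kernel R \<and> map_vec Im z \<in> mat_kernel R"
proof -
  have "map_mat of_real R *\<^sub>v z = 0\<^sub>v m
      \<longleftrightarrow> R *\<^sub>v map_vec Re z = 0\<^sub>v m \<and> R *\<^sub>v map_vec Im z = 0\<^sub>v m" (is "?Mz = _ \<longleftrightarrow> _")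
  proof
    assume "?Mz = 0\<^sub>v m"
    then show "R *\<^sub>v map_vec Re z = 0\<^sub>v m \<and> R *\<^sub>v map_vec Im z = 0\<^sub>v m"
      using of_real_mat_mult_vec_Re_Im[OF R z] by simp
  next
    assume "R *\<^sub>v map_vec Re z = 0\<^sub>v m \<and> R *\<^sub>v map_vec Im z = 0\<^sub>v m"
    then show "?Mz = 0\<^sub>v m"
      using R of_real_mat_mult_vec_Re_Im[OF R z] by (intro complex_vec_eqI) simp_all
  qed
  then show ?thesis using R z by (simp add: mat_kernel_def)
qed

lemma mat_kernel_of_real_cong:
  fixes R R' :: "real mat"
  assumes R: "R \<in> carrier_mat m k" and R': "R' \<in> carrier_mat m' k"
    and ker: "mat_kernel R = mat_kernel R'"
  shows "mat_kernel (map_mat complex_of_real R) = mat_kernel (map_mat complex_of_real R')"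
proof (rule Set.set_eqI)
  fix z :: "complex vec"
  show "z \<in> mat_kernel (map_mat of_real R) \<longleftrightarrow> z \<in> mat_kernel (map_mat of_real R')"
  proof (cases "z \<in> carrier_vec k")
    case True
    then show ?thesis using mat_kernel_of_real_iff[OF R True] mat_kernel_of_real_iff[OF R' True] ker
      by simp
  qed (use R R' in \<open>simp add: mat_kernel_def\<close>)
qed

lemma Re_mat_carrier: "C \<in> carrier_mat m k \<Longrightarrow> Re_mat C \<in> carrier_mat m k"
  by (simp add: Re_mat_def)

lemma transpose_Re_mat: "transpose_mat (Re_mat C) = Re_mat (transpose_mat C)"
  by (intro eq_matI) (auto simp: Re_mat_def)

lemma Re_mat_mult_vec:
  assumes "C \<in> carrier_mat m k" and "x \<in> carrier_vec k"
  shows "Re_mat C *\<^sub>v x = map_vec Re (C *\<^sub>v map_vec complex_of_real x)"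
  using assms by (intro eq_vecI) (auto simp: Re_mat_def scalar_prod_def)

section \<open>Simple zero eigenvalues of symmetric matrices\<close>

lemma sum_list_eq_sum_list_min_1:
  fixes ks :: "nat list"
  assumes "\<forall>k\<in>set ks. 0 < k" and "sum_list (map (min 1) ks) = sum_list (map (min 2) ks)"
  shows "sum_list ks = sum_list (map (min 1) ks)"
  using assms
proof (induction ks)
  case (Cons k ks)
  have "sum_list (map (min 1) ks) \<le> sum_list (map (min 2) ks)"
    by (induction ks) (auto intro: add_mono)
  with Cons.prems have "min 1 k = min 2 k" "sum_list (map (min 1) ks) = sum_list (map (min 2) ks)"
    by auto
  with Cons show ?case by auto
qed simp

text \<open>Algebraic and geometric multiplicity agree once the generalised eigenspace stops growing
  at the first step: then every Jordan block for the eigenvalue has size one.\<close>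

lemma order_char_poly_eq_dim_eigenspace:
  fixes M :: "complex mat"
  assumes M: "M \<in> carrier_mat n n"
    and stable: "dim_gen_eigenspace M a 2 = dim_gen_eigenspace M a 1"
  shows "order a (char_poly M) = dim_gen_eigenspace M a 1"
proof -
  obtain as where "char_poly M = (\<Prod>a\<leftarrow>as. [:-a, 1:])"
    using char_poly_factorized[OF M] by auto
  from jordan_nf_exists[OF M this] obtain n_as where jnf: "jordan_nf M n_as" by auto
  define ks where "ks = map fst (filter (\<lambda>na. snd na = a) n_as)"
  have pos: "\<forall>k\<in>set ks. 0 < k"
    using jnf unfolding jordan_nf_def ks_def by force
  have dim: "dim_gen_eigenspace M a k = sum_list (map (min k) ks)" for k :: nat
  proof -
    have "map fst [(n, e)\<leftarrow>n_as. e = a] = ks" unfolding ks_def by (induction n_as) auto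
    then show ?thesis using dim_gen_eigenspace[OF jnf, of a k] by simp
  qed
  have "order a (char_poly M) = sum_list ks"
    using jordan_nf_order[OF jnf] ks_def by simp
  also have "\<dots> = sum_list (map (min 1) ks)"
    using sum_list_eq_sum_list_min_1[OF pos] stable by (simp add: dim)
  finally show ?thesis by (simp add: dim)
qed

lemma kernel_dim_le_1:
  fixes M :: "'a :: field mat"
  assumes M: "M \<in> carrier_mat n n" and ker: "mat_kernel M = {c \<cdot>\<^sub>v b | c. True}"
  shows "kernel_dim M \<le> 1"
proof -
  interpret K: kernel n n M by unfold_locales (rule M)
  have b: "b \<in> mat_kernel M"
    using ker by (auto intro: exI[of _ 1])
  have "K.Ker.span {b} = mat_kernel M"
  proof (intro equalityI subsetI)
    fix z assume "z \<in> K.Ker.span {b}"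
    then show "z \<in> mat_kernel M" using K.Ker.span_closed[of "{b}"] b by auto
  next
    fix z assume "z \<in> mat_kernel M"
    with ker obtain c where z: "z = c \<cdot>\<^sub>v b" by blast
    have "submodule class_ring (K.Ker.span {b}) K.VK"
      by (rule K.Ker.span_is_submodule) (use b in auto)
    moreover have "b \<in> K.Ker.span {b}"
      by (rule K.Ker.span_self) (use b in auto)
    ultimately show "z \<in> K.Ker.span {b}"
      unfolding z using submodule.smult_closed[of class_ring _ K.VK c b]
      by (simp add: module_vec_simps)
  qed
  then have "K.Ker.dim \<le> 1" by (intro K.Ker.dim_le1I) (use b in auto)
  then show ?thesis by simp
qed

lemma mat_kernel_mult_self_sym:
  fixes R :: "real mat"
  assumes R: "R \<in> carrier_mat n n" and sym: "transpose_mat R = R"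
  shows "mat_kernel (R * R) = mat_kernel R"
proof
  show "mat_kernel R \<subseteq> mat_kernel (R * R)" by (rule mat_kernel_mult_subset[OF R R])
  show "mat_kernel (R * R) \<subseteq> mat_kernel R"
  proof
    fix v assume "v \<in> mat_kernel (R * R)"
    then have v: "v \<in> carrier_vec n" and RRv: "R *\<^sub>v (R *\<^sub>v v) = 0\<^sub>v n"
      using R by (auto simp: mat_kernel_def)
    have Rv: "R *\<^sub>v v \<in> carrier_vec n" using R v by simp
    have "(R *\<^sub>v v) \<bullet>c (R *\<^sub>v v) = (transpose_mat R *\<^sub>v v) \<bullet> (R *\<^sub>v v)"
      using sym by simp
    also have "\<dots> = v \<bullet> (R *\<^sub>v (R *\<^sub>v v))"
      by (rule transpose_vec_mult_scalar[OF R Rv v])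
    finally have "R *\<^sub>v v = 0\<^sub>v n"
      using RRv v conjugate_square_eq_0_vec[OF Rv] by simp
    then show "v \<in> mat_kernel R" using R v by (auto simp: mat_kernel_def)
  qed
qed

text \<open>Passing to the complexification gives access to the Jordan normal form, and
  \<open>ker R\<^sup>2 = ker R\<close> makes the generalised eigenspace of 0 collapse to the kernel.\<close>

lemma order_0_char_poly_sym:
  fixes R :: "real mat"
  assumes R: "R \<in> carrier_mat n n" and sym: "transpose_mat R = R"
    and ker: "mat_kernel R = {c \<cdot>\<^sub>v a | c. True}" and a: "a \<noteq> 0\<^sub>v n"
  shows "order 0 (char_poly R) = 1"
proof -
  let ?M = "map_mat complex_of_real R"
  have M: "?M \<in> carrier_mat n n" using R by simp
  have a_ker: "a \<in> mat_kernel R" using ker by (auto intro: exI[of _ 1])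
  then have a_carrier: "a \<in> carrier_vec n" using R by (simp add: mat_kernel_def)
  have ker_M: "mat_kernel ?M = {c \<cdot>\<^sub>v map_vec complex_of_real a | c. True}"
  proof (intro equalityI subsetI)
    fix z assume z: "z \<in> mat_kernel ?M"
    then have zc: "z \<in> carrier_vec n" using M by (simp add: mat_kernel_def)
    obtain c1 c2 where "map_vec Re z = c1 \<cdot>\<^sub>v a" "map_vec Im z = c2 \<cdot>\<^sub>v a"
      using z mat_kernel_of_real_iff[OF R zc] ker by auto
    then have "z = (complex_of_real c1 + \<i> * complex_of_real c2) \<cdot>\<^sub>v map_vec complex_of_real a"
      using zc a_carrier by (intro complex_vec_eqI) auto
    then show "z \<in> {c \<cdot>\<^sub>v map_vec complex_of_real a | c. True}" by blast
  next
    fix z assume "z \<in> {c \<cdot>\<^sub>v map_vec complex_of_real a | c. True}"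
    then obtain c where z: "z = c \<cdot>\<^sub>v map_vec complex_of_real a" by blast
    have "map_vec Re z = Re c \<cdot>\<^sub>v a" "map_vec Im z = Im c \<cdot>\<^sub>v a"
      unfolding z by auto
    then show "z \<in> mat_kernel ?M"
      using mat_kernel_of_real_iff[OF R] z a_carrier ker by auto
  qed
  have char_M: "char_matrix ?M 0 = ?M" using M by (intro eq_matI) (auto simp: char_matrix_def)
  have "mat_kernel (?M ^\<^sub>m 2) = mat_kernel ?M"
  proof -
    have "?M ^\<^sub>m 2 = map_mat complex_of_real (R * R)"
      using of_real_hom.mat_hom_mult[OF R R, symmetric] by (simp add: numeral_2_eq_2)
    then show ?thesis
      using mat_kernel_of_real_cong[OF mult_carrier_mat[OF R R] R mat_kernel_mult_self_sym[OF R sym]]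
      by simp
  qed
  then have "dim_gen_eigenspace ?M 0 2 = dim_gen_eigenspace ?M 0 1"
    using M by (simp add: dim_gen_eigenspace_def char_M kernel_dim_def)
  from order_char_poly_eq_dim_eigenspace[OF M this]
  have "order 0 (char_poly ?M) = kernel_dim ?M"
    using M by (simp add: dim_gen_eigenspace_def char_M)
  moreover have "order 0 (char_poly ?M) = order 0 (char_poly R)"
  proof -
    interpret map_poly_inj_idom_divide_hom complex_of_real ..
    show ?thesis unfolding of_real_hom.char_poly_hom[OF R] using order_hom[of 0 "char_poly R"] by simp
  qed
  moreover have "order 0 (char_poly R) \<noteq> 0"
  proof -
    have "eigenvalue R 0"
      unfolding eigenvalue_def eigenvector_def
      using a_ker a R by (intro exI[of _ a]) (auto simp: mat_kernel_def)
    then have "poly (char_poly R) 0 = 0" using eigenvalue_root_char_poly[OF R] by simp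
    moreover have "char_poly R \<noteq> 0" using degree_monic_char_poly[OF R] by auto
    ultimately show ?thesis by (simp add: order_root)
  qed
  ultimately show ?thesis using kernel_dim_le_1[OF M ker_M] by linarith
qed

section \<open>The matrix \<open>B = I\<^sub>n + \<i> A\<close>\<close>

lemma dim_I_mat [simp]: "dim_row (I_mat n) = n+1" "dim_col (I_mat n) = n+1"
  by (simp_all add: I_mat_def)

lemma I_mat_carrier [simp]: "I_mat n \<in> carrier_mat (n+1) (n+1)"
  by (simp add: carrier_matI)

lemma I_mat_mult_vec:
  assumes "u \<in> carrier_vec (n+1)"
  shows "I_mat n *\<^sub>v u = vec (n+1) (\<lambda>i. if i = 0 then 0 else u $ i)"
proof (rule eq_vecI)
  fix i assume "i < dim_vec (vec (n+1) (\<lambda>i. if i = 0 then 0 else u $ i))"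
  then have i: "i < n+1" by simp
  have "(\<Sum>j\<in>{0..<n+1}. I_mat n $$ (i,j) * u $ j)
      = (\<Sum>j\<in>{0..<n+1}. if j = i then (if i = 0 then 0 else u $ i) else 0)"
    by (intro sum.cong) (use i in \<open>auto simp: I_mat_def\<close>)
  then show "(I_mat n *\<^sub>v u) $ i = vec (n+1) (\<lambda>i. if i = 0 then 0 else u $ i) $ i"
    using i assms by (simp add: scalar_prod_def)
qed simp

lemma I_mat_mult_vec_eq_0_iff:
  assumes "u \<in> carrier_vec (n+1)"
  shows "I_mat n *\<^sub>v u = 0\<^sub>v (n+1) \<longleftrightarrow> u = u $ 0 \<cdot>\<^sub>v unit_vec (n+1) 0"
proof -
  have "I_mat n *\<^sub>v u = 0\<^sub>v (n+1) \<longleftrightarrow> (\<forall>i<n+1. 0 < i \<longrightarrow> u $ i = 0)"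
    by (auto simp: I_mat_mult_vec[OF assms] vec_eq_iff)
  also have "\<dots> \<longleftrightarrow> u = u $ 0 \<cdot>\<^sub>v unit_vec (n+1) 0"
    using assms by (auto simp: vec_eq_iff)
  finally show ?thesis .
qed

lemma scalar_prod_I_mat_mult_vec:
  assumes "u \<in> carrier_vec (n+1)"
  shows "u \<bullet> (I_mat n *\<^sub>v u) = (I_mat n *\<^sub>v u) \<bullet> (I_mat n *\<^sub>v u)"
  unfolding I_mat_mult_vec[OF assms] scalar_prod_def by (intro sum.cong) auto

lemma dim_B_mat [simp]: "dim_row (B_mat n A) = dim_row A" "dim_col (B_mat n A) = dim_col A"
  by (simp_all add: B_mat_def)

lemma B_mat_carrier: "A \<in> carrier_mat (n+1) (n+1) \<Longrightarrow> B_mat n A \<in> carrier_mat (n+1) (n+1)"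
  by (intro carrier_matI) auto

lemma index_B_mat:
  assumes "A \<in> carrier_mat (n+1) (n+1)" "i < n+1" "j < n+1"
  shows "B_mat n A $$ (i,j) = of_real (I_mat n $$ (i,j)) + \<i> * of_real (A $$ (i,j))"
  using assms by (simp add: B_mat_def I_mat_def)

lemma transpose_B_mat:
  assumes "A \<in> carrier_mat (n+1) (n+1)" and "transpose_mat A = A"
  shows "transpose_mat (B_mat n A) = B_mat n A"
proof (rule eq_matI)
  fix i j assume ij: "i < dim_row (B_mat n A)" "j < dim_col (B_mat n A)"
  have "A $$ (j, i) = A $$ (i, j)"
    using assms ij by (metis carrier_matD dim_B_mat index_transpose_mat(1))
  then show "transpose_mat (B_mat n A) $$ (i, j) = B_mat n A $$ (i, j)"
    using assms ij by (auto simp: index_B_mat I_mat_def)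
qed (use assms in auto)

lemma Re_B_mat_mult_vec:
  assumes A: "A \<in> carrier_mat (n+1) (n+1)" and w: "w \<in> carrier_vec (n+1)"
  shows "map_vec Re (B_mat n A *\<^sub>v w) = I_mat n *\<^sub>v map_vec Re w - A *\<^sub>v map_vec Im w"
proof (rule eq_vecI)
  fix i assume "i < dim_vec (I_mat n *\<^sub>v map_vec Re w - A *\<^sub>v map_vec Im w)"
  then have i: "i < n+1" using A by simp
  have "map_vec Re (B_mat n A *\<^sub>v w) $ i = (\<Sum>j\<in>{0..<n+1}. Re (B_mat n A $$ (i,j) * w $ j))"
    using i A w by (simp add: scalar_prod_def)
  also have "\<dots> = (\<Sum>j\<in>{0..<n+1}. I_mat n $$ (i,j) * Re (w $ j) - A $$ (i,j) * Im (w $ j))"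
    by (rule sum.cong) (use i A in \<open>auto simp: index_B_mat\<close>)
  also have "\<dots> = (I_mat n *\<^sub>v map_vec Re w - A *\<^sub>v map_vec Im w) $ i"
    using i A w by (simp add: scalar_prod_def sum_subtractf)
  finally show "map_vec Re (B_mat n A *\<^sub>v w) $ i
      = (I_mat n *\<^sub>v map_vec Re w - A *\<^sub>v map_vec Im w) $ i" .
qed (use A in simp)

lemma Im_B_mat_mult_vec:
  assumes A: "A \<in> carrier_mat (n+1) (n+1)" and w: "w \<in> carrier_vec (n+1)"
  shows "map_vec Im (B_mat n A *\<^sub>v w) = I_mat n *\<^sub>v map_vec Im w + A *\<^sub>v map_vec Re w"
proof (rule eq_vecI)
  fix i assume "i < dim_vec (I_mat n *\<^sub>v map_vec Im w + A *\<^sub>v map_vec Re w)"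
  then have i: "i < n+1" using A by simp
  have "map_vec Im (B_mat n A *\<^sub>v w) $ i = (\<Sum>j\<in>{0..<n+1}. Im (B_mat n A $$ (i,j) * w $ j))"
    using i A w by (simp add: scalar_prod_def)
  also have "\<dots> = (\<Sum>j\<in>{0..<n+1}. I_mat n $$ (i,j) * Im (w $ j) + A $$ (i,j) * Re (w $ j))"
    by (rule sum.cong) (use i A in \<open>auto simp: index_B_mat\<close>)
  also have "\<dots> = (I_mat n *\<^sub>v map_vec Im w + A *\<^sub>v map_vec Re w) $ i"
    using i A w by (simp add: scalar_prod_def sum.distrib)
  finally show "map_vec Im (B_mat n A *\<^sub>v w) $ i
      = (I_mat n *\<^sub>v map_vec Im w + A *\<^sub>v map_vec Re w) $ i" .
qed (use A in simp)

lemma col_B_mat_0: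
  assumes "A \<in> carrier_mat (n+1) (n+1)"
  shows "col (B_mat n A) 0 = \<i> \<cdot>\<^sub>v map_vec complex_of_real (col A 0)"
  using assms by (intro eq_vecI) (auto simp: index_B_mat I_mat_def)

lemma B_mat_mult_vec_unit_vec_0:
  assumes A: "A \<in> carrier_mat (n+1) (n+1)"
  shows "B_mat n A *\<^sub>v (z \<cdot>\<^sub>v unit_vec (n+1) 0) = (\<i> * z) \<cdot>\<^sub>v map_vec complex_of_real (col A 0)"
proof -
  have B: "B_mat n A \<in> carrier_mat (n+1) (n+1)" using B_mat_carrier[OF A] .
  have "B_mat n A *\<^sub>v unit_vec (n+1) 0 = col (B_mat n A) 0"
    by (rule mult_mat_vec_unit_vec[OF B]) simp
  then show ?thesis
    using mult_mat_vec[OF B unit_vec_carrier, of z 0] col_B_mat_0[OF A]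
    by (simp add: smult_smult_assoc mult.commute)
qed

text \<open>With \<open>w = u + \<i> v\<close> and \<open>B w = x\<close> real, the real and imaginary parts read
  \<open>x = I u - A v\<close> and \<open>A u = - I v\<close>; the symmetry of \<open>A\<close> turns \<open>x \<bullet> u\<close> into a sum of squares.\<close>

lemma B_mat_preimage_scalar_prod:
  assumes A: "A \<in> carrier_mat (n+1) (n+1)" and sym: "transpose_mat A = A"
    and w: "w \<in> carrier_vec (n+1)" and Bw: "B_mat n A *\<^sub>v w = map_vec complex_of_real x"
  shows "x \<bullet> map_vec Re w
    = (I_mat n *\<^sub>v map_vec Re w) \<bullet> (I_mat n *\<^sub>v map_vec Re w)
      + (I_mat n *\<^sub>v map_vec Im w) \<bullet> (I_mat n *\<^sub>v map_vec Im w)"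
proof -
  define u v where "u = map_vec Re w" and "v = map_vec Im w"
  have u: "u \<in> carrier_vec (n+1)" and v: "v \<in> carrier_vec (n+1)"
    using w by (simp_all add: u_def v_def)
  have Iu: "I_mat n *\<^sub>v u \<in> carrier_vec (n+1)" and Iv: "I_mat n *\<^sub>v v \<in> carrier_vec (n+1)"
    using mult_mat_vec_carrier[OF I_mat_carrier] u v by blast+
  have Av: "A *\<^sub>v v \<in> carrier_vec (n+1)" using A v by simp
  have x: "x = I_mat n *\<^sub>v u - A *\<^sub>v v"
    using arg_cong[OF Bw, of "map_vec Re"] Re_B_mat_mult_vec[OF A w] by (simp add: u_def v_def)
  have Im0: "I_mat n *\<^sub>v v + A *\<^sub>v u = 0\<^sub>v (n+1)"
    using arg_cong[OF Bw, of "map_vec Im"] Im_B_mat_mult_vec[OF A w] arg_cong[OF Bw, of dim_vec] A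
    by (simp add: u_def v_def)
  have Au: "A *\<^sub>v u = - (I_mat n *\<^sub>v v)"
  proof (rule eq_vecI)
    fix i assume "i < dim_vec (- (I_mat n *\<^sub>v v))"
    with arg_cong[OF Im0, of "\<lambda>z. z $ i"] A show "(A *\<^sub>v u) $ i = (- (I_mat n *\<^sub>v v)) $ i"
      by (simp add: eq_neg_iff_add_eq_0 add.commute)
  qed (use A in simp)
  have "(A *\<^sub>v v) \<bullet> u = v \<bullet> (A *\<^sub>v u)"
    using transpose_vec_mult_scalar[OF A u v] sym by simp
  also have "\<dots> = - (v \<bullet> (I_mat n *\<^sub>v v))"
    unfolding Au using v Iv by simp
  also have "\<dots> = - ((I_mat n *\<^sub>v v) \<bullet> (I_mat n *\<^sub>v v))"
    unfolding scalar_prod_I_mat_mult_vec[OF v] ..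
  finally have Avu: "(A *\<^sub>v v) \<bullet> u = - ((I_mat n *\<^sub>v v) \<bullet> (I_mat n *\<^sub>v v))" .
  have "x \<bullet> u = (I_mat n *\<^sub>v u) \<bullet> u - (A *\<^sub>v v) \<bullet> u"
    unfolding x by (rule minus_scalar_prod_distrib[OF Iu Av u])
  also have "(I_mat n *\<^sub>v u) \<bullet> u = (I_mat n *\<^sub>v u) \<bullet> (I_mat n *\<^sub>v u)"
    unfolding comm_scalar_prod[OF Iu u] scalar_prod_I_mat_mult_vec[OF u] ..
  finally have "x \<bullet> u = (I_mat n *\<^sub>v u) \<bullet> (I_mat n *\<^sub>v u) + (I_mat n *\<^sub>v v) \<bullet> (I_mat n *\<^sub>v v)"
    unfolding Avu by simp
  then show ?thesis by (simp only: u_def v_def)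
qed

lemma B_mat_preimage_orthogonal:
  assumes A: "A \<in> carrier_mat (n+1) (n+1)" and sym: "transpose_mat A = A"
    and w: "w \<in> carrier_vec (n+1)" and Bw: "B_mat n A *\<^sub>v w = map_vec complex_of_real x"
    and orth: "x \<bullet> map_vec Re w = 0"
  shows "map_vec Re w = Re (w $ 0) \<cdot>\<^sub>v unit_vec (n+1) 0"
    and "map_vec Im w = Im (w $ 0) \<cdot>\<^sub>v unit_vec (n+1) 0"
proof -
  let ?Iu = "I_mat n *\<^sub>v map_vec Re w" and ?Iv = "I_mat n *\<^sub>v map_vec Im w"
  have "?Iu \<bullet> ?Iu + ?Iv \<bullet> ?Iv = 0"
    using B_mat_preimage_scalar_prod[OF A sym w Bw] orth by simp
  then have "?Iu \<bullet> ?Iu = 0" "?Iv \<bullet> ?Iv = 0"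
    using real_scalar_prod_self_nonneg[of ?Iu] real_scalar_prod_self_nonneg[of ?Iv] by linarith+
  moreover have "?Iu \<in> carrier_vec (n+1)" "?Iv \<in> carrier_vec (n+1)"
    using mult_mat_vec_carrier[OF I_mat_carrier] w by simp_all
  ultimately have "?Iu = 0\<^sub>v (n+1)" "?Iv = 0\<^sub>v (n+1)"
    using real_scalar_prod_self_eq_0_iff by blast+
  then show "map_vec Re w = Re (w $ 0) \<cdot>\<^sub>v unit_vec (n+1) 0"
    and "map_vec Im w = Im (w $ 0) \<cdot>\<^sub>v unit_vec (n+1) 0"
    using I_mat_mult_vec_eq_0_iff[of "map_vec Re w" n] I_mat_mult_vec_eq_0_iff[of "map_vec Im w" n] w
    by auto
qed

lemma B_mat_mult_vec_eq_0:
  assumes A: "A \<in> carrier_mat (n+1) (n+1)" and sym: "transpose_mat A = A"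
    and col: "col A 0 \<noteq> 0\<^sub>v (n+1)"
    and w: "w \<in> carrier_vec (n+1)" and Bw: "B_mat n A *\<^sub>v w = 0\<^sub>v (n+1)"
  shows "w = 0\<^sub>v (n+1)"
proof -
  have "B_mat n A *\<^sub>v w = map_vec complex_of_real (0\<^sub>v (n+1))"
    using Bw by auto
  from B_mat_preimage_orthogonal[OF A sym w this]
  have w0: "w = w $ 0 \<cdot>\<^sub>v unit_vec (n+1) 0"
    using w by (intro complex_vec_eqI) auto
  have "(\<i> * w $ 0) \<cdot>\<^sub>v map_vec complex_of_real (col A 0) = 0\<^sub>v (n+1)"
    using Bw B_mat_mult_vec_unit_vec_0[OF A, of "w $ 0"] w0 by simp
  moreover have "map_vec complex_of_real (col A 0) \<noteq> 0\<^sub>v (n+1)"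
    using col by (metis map_vec_Re_of_real map_vec_Re_Im_zero(1))
  moreover have "map_vec complex_of_real (col A 0) \<in> carrier_vec (n+1)"
    using A by (simp add: carrier_vecI)
  ultimately have "\<i> * w $ 0 = 0"
    using smult_vec_eq_0_iff by blast
  then show ?thesis by (subst w0) auto
qed

lemma invertible_B_mat:
  assumes A: "A \<in> carrier_mat (n+1) (n+1)" and sym: "transpose_mat A = A"
    and col: "col A 0 \<noteq> 0\<^sub>v (n+1)"
  shows "invertible_mat (B_mat n A)"
proof -
  have B: "B_mat n A \<in> carrier_mat (n+1) (n+1)" using B_mat_carrier[OF A] .
  have "det (B_mat n A) \<noteq> 0"
    using B_mat_mult_vec_eq_0[OF A sym col] det_0_iff_vec_prod_zero[OF B] by blast
  from det_non_zero_imp_unit[OF B this, of "()"]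
  obtain D where D: "D \<in> carrier_mat (n+1) (n+1)" "D * B_mat n A = 1\<^sub>m (n+1)" "B_mat n A * D = 1\<^sub>m (n+1)"
    by (auto simp: Units_def ring_mat_def)
  show ?thesis
    unfolding invertible_mat_def inverts_mat_def using A D by (intro conjI exI[of _ D]) auto
qed

lemma B_mat_preimage_Re_0:
  assumes A: "A \<in> carrier_mat (n+1) (n+1)" and sym: "transpose_mat A = A"
    and w: "w \<in> carrier_vec (n+1)" and Bw: "B_mat n A *\<^sub>v w = map_vec complex_of_real x"
    and Re_w: "map_vec Re w = 0\<^sub>v (n+1)"
  shows "x = (- Im (w $ 0)) \<cdot>\<^sub>v col A 0"
proof -
  have "dim_vec x = n+1"
    using arg_cong[OF Bw, of dim_vec] A by simp
  then have "x \<bullet> map_vec Re w = 0"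
    unfolding Re_w by (simp add: scalar_prod_def)
  from B_mat_preimage_orthogonal(2)[OF A sym w Bw this]
  have "map_vec Im w = Im (w $ 0) \<cdot>\<^sub>v unit_vec (n+1) 0" .
  then have "w = (\<i> * of_real (Im (w $ 0))) \<cdot>\<^sub>v unit_vec (n+1) 0"
    using w Re_w by (intro complex_vec_eqI) auto
  then have "map_vec complex_of_real x
      = (\<i> * (\<i> * of_real (Im (w $ 0)))) \<cdot>\<^sub>v map_vec complex_of_real (col A 0)"
    using Bw B_mat_mult_vec_unit_vec_0[OF A] by metis
  from arg_cong[OF this, of "map_vec Re"] show ?thesis by simp
qed

section \<open>The real part of the inverse\<close>

lemma psd_Re_inverse_B_mat:
  assumes A: "A \<in> carrier_mat (n+1) (n+1)" and sym: "transpose_mat A = A"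
    and C: "C \<in> carrier_mat (n+1) (n+1)" and BC: "B_mat n A * C = 1\<^sub>m (n+1)"
  shows "psd_mat (n+1) (Re_mat C)"
  unfolding psd_mat_def
proof (intro conjI ballI)
  show "Re_mat C \<in> carrier_mat (n+1) (n+1)" using Re_mat_carrier[OF C] .
  show "transpose_mat (Re_mat C) = Re_mat C"
    using transpose_right_inverse_of_symmetric[OF B_mat_carrier[OF A] C transpose_B_mat[OF A sym] BC]
    by (simp add: transpose_Re_mat)
next
  fix x :: "real vec" assume x: "x \<in> carrier_vec (n+1)"
  define w where "w = C *\<^sub>v map_vec complex_of_real x"
  have x': "map_vec complex_of_real x \<in> carrier_vec (n+1)" using x by simp
  have w: "w \<in> carrier_vec (n+1)" unfolding w_def using mult_mat_vec_carrier[OF C x'] .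
  have "B_mat n A *\<^sub>v w = map_vec complex_of_real x"
    unfolding w_def by (rule mult_mat_vec_inverse_cancel[OF B_mat_carrier[OF A] C BC x'])
  from B_mat_preimage_scalar_prod[OF A sym w this]
  have "x \<bullet> (Re_mat C *\<^sub>v x)
    = (I_mat n *\<^sub>v map_vec Re w) \<bullet> (I_mat n *\<^sub>v map_vec Re w)
      + (I_mat n *\<^sub>v map_vec Im w) \<bullet> (I_mat n *\<^sub>v map_vec Im w)"
    using Re_mat_mult_vec[OF C x] by (simp add: w_def)
  then show "0 \<le> x \<bullet> (Re_mat C *\<^sub>v x)"
    using real_scalar_prod_self_nonneg by (metis add_nonneg_nonneg)
qed

lemma mat_kernel_Re_inverse_B_mat:
  assumes A: "A \<in> carrier_mat (n+1) (n+1)" and sym: "transpose_mat A = A"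
    and C: "C \<in> carrier_mat (n+1) (n+1)"
    and BC: "B_mat n A * C = 1\<^sub>m (n+1)" and CB: "C * B_mat n A = 1\<^sub>m (n+1)"
  shows "mat_kernel (Re_mat C) = {c \<cdot>\<^sub>v col A 0 | c. True}"
proof (intro equalityI subsetI)
  fix x assume "x \<in> mat_kernel (Re_mat C)"
  note mat_kernelD[OF Re_mat_carrier[OF C] this]
  then have x: "x \<in> carrier_vec (n+1)" and Re_w: "map_vec Re (C *\<^sub>v map_vec complex_of_real x) = 0\<^sub>v (n+1)"
    using Re_mat_mult_vec[OF C] by auto
  have x': "map_vec complex_of_real x \<in> carrier_vec (n+1)" using x by simp
  have "x = (- Im ((C *\<^sub>v map_vec complex_of_real x) $ 0)) \<cdot>\<^sub>v col A 0"
    by (rule B_mat_preimage_Re_0[OF A sym mult_mat_vec_carrier[OF C x']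
        mult_mat_vec_inverse_cancel[OF B_mat_carrier[OF A] C BC x'] Re_w])
  then show "x \<in> {c \<cdot>\<^sub>v col A 0 | c. True}" by blast
next
  fix x assume "x \<in> {c \<cdot>\<^sub>v col A 0 | c. True}"
  then obtain c where x_def: "x = c \<cdot>\<^sub>v col A 0" by blast
  have x: "x \<in> carrier_vec (n+1)" using A by (simp add: x_def carrier_vecI)
  define w where "w = (- (\<i> * of_real c)) \<cdot>\<^sub>v unit_vec (n+1) 0"
  have w: "w \<in> carrier_vec (n+1)" by (simp add: w_def)
  have "B_mat n A *\<^sub>v w = map_vec complex_of_real x"
    unfolding w_def B_mat_mult_vec_unit_vec_0[OF A] x_def by auto
  then have "C *\<^sub>v map_vec complex_of_real x = w"
    using mult_mat_vec_inverse_cancel[OF C B_mat_carrier[OF A] CB w] by simp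
  then have "Re_mat C *\<^sub>v x = 0\<^sub>v (n+1)"
    using Re_mat_mult_vec[OF C x] by (auto simp: w_def)
  then show "x \<in> mat_kernel (Re_mat C)"
    by (rule mat_kernelI[OF Re_mat_carrier[OF C] x])
qed

theorem lemma4p3:
  fixes n :: nat and A :: "real mat"
  assumes "A \<in> carrier_mat (n+1) (n+1)"
    and "transpose_mat A = A"
    and "\<exists>j\<in>{1..n}. A $$ (0, j) \<noteq> 0"
  shows "invertible_mat (B_mat n A) \<and>
    (\<forall>C \<in> carrier_mat (n+1) (n+1).
       inverts_mat (B_mat n A) C \<and> inverts_mat C (B_mat n A) \<longrightarrow>
       psd_mat (n+1) (Re_mat C) \<and>
       order 0 (char_poly (Re_mat C)) = 1 \<and>
       mat_kernel (Re_mat C) = {c \<cdot>\<^sub>v col A 0 | c. True})"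
proof -
  note A = assms(1) and sym = assms(2)
  obtain j where j: "j \<in> {1..n}" "A $$ (0, j) \<noteq> 0" using assms(3) by blast
  then have j_lt: "j < n+1" by simp
  have "col A 0 $ j = transpose_mat A $$ (0, j)" using A j_lt by simp
  then have "col A 0 $ j \<noteq> 0" using sym j(2) by simp
  then have col: "col A 0 \<noteq> 0\<^sub>v (n+1)" using j_lt by auto
  have "psd_mat (n+1) (Re_mat C) \<and> order 0 (char_poly (Re_mat C)) = 1
      \<and> mat_kernel (Re_mat C) = {c \<cdot>\<^sub>v col A 0 | c. True}"
    if C: "C \<in> carrier_mat (n+1) (n+1)" and inv: "inverts_mat (B_mat n A) C" "inverts_mat C (B_mat n A)" for C
  proof -
    have BC: "B_mat n A * C = 1\<^sub>m (n+1)" and CB: "C * B_mat n A = 1\<^sub>m (n+1)"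
      using inv A C by (auto simp: inverts_mat_def)
    have psd: "psd_mat (n+1) (Re_mat C)" by (rule psd_Re_inverse_B_mat[OF A sym C BC])
    have ker: "mat_kernel (Re_mat C) = {c \<cdot>\<^sub>v col A 0 | c. True}"
      by (rule mat_kernel_Re_inverse_B_mat[OF A sym C BC CB])
    have "order 0 (char_poly (Re_mat C)) = 1"
      using order_0_char_poly_sym[OF Re_mat_carrier[OF C] _ ker col] psd by (simp add: psd_mat_def)
    with psd ker show ?thesis by blast
  qed
  then show ?thesis using invertible_B_mat[OF A sym col] by blast
qed

end
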